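(* Let $G$ be a connected graph. Then $\gamma_{cI}(G)=2$ if and only if $G\in\{K_{1,n},K_{2,n},K^*_{2,n}\}$ for some $n\ge1$, where $K^*_{2,n}$ is the graph obtained from the complete bipartite graph $K_{2,n}$ by joining (adding the edge between) the two vertices of its $2$-vertex partite set.
   Context: All graphs are finite and simple; $N(v)$ is the open neighborhood of $v$. For $f:V(G)\to\{0,1,2\}$ let $V_i=\{v: f(v)=i\}$ and $\omega(f)=\sum_v f(v)$. A covering Italian dominating function (CID function) of $G$ is an $f:V(G)\to\{0,1,2\}$ such that every vertex $v$ with $f(v)=0$ satisfies $\sum_{u\in N(v)}f(u)\ge 2$, and $V_0$ is an independent set. $\gamma_{cI}(G)$ is the minimum of $\omega(f)$ over all CID functions of $G$. *)

theory Defs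
  imports Main
begin

definition graph :: "'a set \<Rightarrow> ('a \<Rightarrow> 'a \<Rightarrow> bool) \<Rightarrow> bool" where
  "graph V E \<longleftrightarrow> finite V \<and> (\<forall>u v. E u v \<longrightarrow> u \<in> V \<and> v \<in> V)
     \<and> (\<forall>u v. E u v \<longrightarrow> E v u) \<and> (\<forall>v. \<not> E v v)"

definition connected_graph :: "'a set \<Rightarrow> ('a \<Rightarrow> 'a \<Rightarrow> bool) \<Rightarrow> bool" where
  "connected_graph V E \<longleftrightarrow> graph V E \<and> V \<noteq> {} \<and>
     (\<forall>u\<in>V. \<forall>v\<in>V. (E\<^sup>*\<^sup>*) u v)"

definition nbhd :: "'a set \<Rightarrow> ('a \<Rightarrow> 'a \<Rightarrow> bool) \<Rightarrow> 'a \<Rightarrow> 'a set" where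
  "nbhd V E v = {u \<in> V. E v u}"

definition CID_function :: "'a set \<Rightarrow> ('a \<Rightarrow> 'a \<Rightarrow> bool) \<Rightarrow> ('a \<Rightarrow> nat) \<Rightarrow> bool" where
  "CID_function V E f \<longleftrightarrow> (\<forall>v\<in>V. f v \<le> 2)
     \<and> (\<forall>v\<in>V. f v = 0 \<longrightarrow> (\<Sum>u\<in>nbhd V E v. f u) \<ge> 2)
     \<and> (\<forall>u\<in>V. \<forall>v\<in>V. f u = 0 \<and> f v = 0 \<longrightarrow> \<not> E u v)"

definition weight :: "'a set \<Rightarrow> ('a \<Rightarrow> nat) \<Rightarrow> nat" where
  "weight V f = (\<Sum>v\<in>V. f v)"

definition gamma_cI :: "'a set \<Rightarrow> ('a \<Rightarrow> 'a \<Rightarrow> bool) \<Rightarrow> nat" where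
  "gamma_cI V E = Min {weight V f | f. CID_function V E f}"

definition is_K_bip :: "nat \<Rightarrow> nat \<Rightarrow> 'a set \<Rightarrow> ('a \<Rightarrow> 'a \<Rightarrow> bool) \<Rightarrow> bool" where
  "is_K_bip m n V E \<longleftrightarrow> (\<exists>A B. A \<union> B = V \<and> A \<inter> B = {} \<and> card A = m \<and> card B = n
     \<and> (\<forall>u v. E u v \<longleftrightarrow> (u \<in> A \<and> v \<in> B) \<or> (u \<in> B \<and> v \<in> A)))"

definition is_K2n_star :: "nat \<Rightarrow> 'a set \<Rightarrow> ('a \<Rightarrow> 'a \<Rightarrow> bool) \<Rightarrow> bool" where
  "is_K2n_star n V E \<longleftrightarrow> (\<exists>A B. A \<union> B = V \<and> A \<inter> B = {} \<and> card A = 2 \<and> card B = n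
     \<and> (\<forall>u v. E u v \<longleftrightarrow> (u \<in> A \<and> v \<in> B) \<or> (u \<in> B \<and> v \<in> A) \<or> (u \<in> A \<and> v \<in> A \<and> u \<noteq> v)))"

end

theory Submission
  imports Defs
begin

text \<open>On at least two vertices every CID function has weight at least 2: either all values
  are positive, or some vertex has value 0 and already sees weight 2 in its neighbourhood.
  If f has weight exactly 2, a vertex with value 0 sees the whole weight, so it is adjacent
  to every vertex of the support S of f, which has one or two elements; the vertices of value
  0 are independent. Hence G is the join of G[S] with an independent set, and |S| and the
  presence of an edge inside S single out K_{1,n}, K_{2,n} or K*_{2,n}. Conversely, on these
  graphs weight 2 spread evenly over the small part is a CID function.\<close>

definition independent_join :: "'a set \<Rightarrow> ('a \<Rightarrow> 'a \<Rightarrow> bool) \<Rightarrow> 'a set \<Rightarrow> 'a set \<Rightarrow> bool" where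
  "independent_join V E A B \<longleftrightarrow> A \<union> B = V \<and> A \<inter> B = {} \<and> B \<noteq> {}
     \<and> (\<forall>u\<in>B. \<forall>v\<in>B. \<not> E u v) \<and> (\<forall>u\<in>B. \<forall>a\<in>A. E u a)"

lemma CID_function_const_1: "CID_function V E (\<lambda>_. 1)"
  by (simp add: CID_function_def)

lemma finite_CID_weights:
  assumes "finite V"
  shows "finite {weight V f | f. CID_function V E f}"
proof (rule finite_subset)
  show "{weight V f | f. CID_function V E f} \<subseteq> {..2 * card V}"
  proof
    fix x assume "x \<in> {weight V f | f. CID_function V E f}"
    then obtain f where x: "x = weight V f" and "CID_function V E f" by blast
    then have "sum f V \<le> sum (\<lambda>_. 2) V"
      by (intro sum_mono) (auto simp: CID_function_def)
    then show "x \<in> {..2 * card V}" by (simp add: x weight_def mult.commute)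
  qed
qed simp

lemma gamma_cI_le:
  assumes "finite V" and "CID_function V E f"
  shows "gamma_cI V E \<le> weight V f"
  unfolding gamma_cI_def using assms by (auto intro!: Min_le finite_CID_weights)

lemma gamma_cI_attained:
  assumes "finite V"
  obtains f where "CID_function V E f" and "weight V f = gamma_cI V E"
proof -
  have "gamma_cI V E \<in> {weight V f | f. CID_function V E f}"
    unfolding gamma_cI_def using assms CID_function_const_1
    by (intro Min_in finite_CID_weights) auto
  then show ?thesis using that by auto
qed

lemma gamma_cI_le_card:
  assumes "finite V"
  shows "gamma_cI V E \<le> card V"
  using gamma_cI_le[OF assms CID_function_const_1] by (simp add: weight_def)

lemma CID_weight_ge_2:
  assumes card: "card V \<ge> 2" and f: "CID_function V E f"
  shows "weight V f \<ge> 2"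
proof -
  have fin: "finite V" using card by (simp add: card_ge_0_finite)
  show ?thesis
  proof (cases "\<exists>v\<in>V. f v = 0")
  case True
  then obtain v where "v \<in> V" "f v = 0" by blast
  then have "2 \<le> sum f (nbhd V E v)" using f by (simp add: CID_function_def)
  also have "\<dots> \<le> sum f V" by (rule sum_mono2[OF fin]) (auto simp: nbhd_def)
  finally show ?thesis by (simp add: weight_def)
next
  case False
  then have "card V \<le> sum f V"
    using sum_mono[of V "\<lambda>_. 1" f] by (simp add: Suc_le_eq)
  then show ?thesis using card by (simp add: weight_def)
qed
qed

lemma gamma_cI_eq_2_if_CID_weight_2:
  assumes card: "card V \<ge> 2" and f: "CID_function V E f" and w: "weight V f = 2"
  shows "gamma_cI V E = 2"
proof -
  have fin: "finite V" using card by (simp add: card_ge_0_finite)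
  obtain g where "CID_function V E g" and "weight V g = gamma_cI V E"
    using gamma_cI_attained[OF fin] .
  then have "gamma_cI V E \<ge> 2" using CID_weight_ge_2[OF card] by metis
  moreover have "gamma_cI V E \<le> 2" using gamma_cI_le[OF fin f] w by simp
  ultimately show ?thesis by simp
qed

lemma CID_weight_2_zero_adjacent_support:
  assumes fin: "finite V" and f: "CID_function V E f" and w: "weight V f = 2"
    and v: "v \<in> V" "f v = 0" and s: "s \<in> V" "f s \<noteq> 0"
  shows "E v s"
proof (rule ccontr)
  assume "\<not> E v s"
  then have "nbhd V E v \<subseteq> V - {s}" by (auto simp: nbhd_def)
  then have "sum f (nbhd V E v) \<le> sum f (V - {s})" by (intro sum_mono2) (use fin in auto)
  also have "\<dots> < 2" using s w by (simp add: sum_diff1_nat weight_def)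
  moreover have "2 \<le> sum f (nbhd V E v)" using f v by (simp add: CID_function_def)
  ultimately show False by simp
qed

lemma CID_of_independent_join:
  assumes fin: "finite V" and join: "independent_join V E A B" and A: "card A \<in> {1, 2}"
  defines "f \<equiv> \<lambda>v. if v \<in> A then 2 div card A else 0"
  shows "CID_function V E f" and "weight V f = 2"
proof -
  have V: "V = A \<union> B" "A \<inter> B = {}" and finA: "finite A" and finB: "finite B"
    using join fin by (auto simp: independent_join_def)
  have pos: "2 div card A \<noteq> 0" using A by auto
  have "sum f A = sum (\<lambda>_. 2 div card A) A" by (rule sum.cong) (simp_all add: f_def)
  also have "\<dots> = 2" using A by auto
  finally have sumA: "sum f A = 2" .
  have zero: "f v = 0 \<longleftrightarrow> v \<in> B" if "v \<in> V" for v
    using that V pos by (auto simp: f_def)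
  have "sum f B = 0" using V(2) by (intro sum.neutral) (auto simp: f_def)
  then show "weight V f = 2"
    using sumA V finA finB by (simp add: weight_def sum.union_disjoint)
  show "CID_function V E f"
    unfolding CID_function_def
  proof (intro conjI ballI impI)
    fix v assume "v \<in> V"
    show "f v \<le> 2" using A by (auto simp: f_def)
  next
    fix v assume "v \<in> V" "f v = 0"
    then have "A \<subseteq> nbhd V E v" using join zero by (auto simp: independent_join_def nbhd_def)
    then have "sum f A \<le> sum f (nbhd V E v)"
      by (intro sum_mono2) (use fin in \<open>auto simp: nbhd_def\<close>)
    then show "2 \<le> sum f (nbhd V E v)" using sumA by simp
  next
    fix u v assume "u \<in> V" "v \<in> V" "f u = 0 \<and> f v = 0"
    then show "\<not> E u v" using join zero by (auto simp: independent_join_def)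
  qed
qed

lemma independent_join_card_ge_2:
  assumes "finite V" and "independent_join V E A B" and "card A \<ge> 1"
  shows "card V \<ge> 2"
proof -
  have "finite A" "finite B" "B \<noteq> {}" "V = A \<union> B" "A \<inter> B = {}"
    using assms by (auto simp: independent_join_def)
  moreover from this have "card B \<ge> 1" by (simp add: Suc_le_eq card_gt_0_iff)
  ultimately show ?thesis using assms(3) by (simp add: card_Un_disjoint)
qed

lemma independent_join_of_CID_weight_2:
  assumes conn: "connected_graph V E" and card: "card V \<ge> 2"
    and f: "CID_function V E f" and w: "weight V f = 2"
  obtains A B where "independent_join V E A B" and "card A \<in> {1, 2}"
proof -
  have g: "graph V E" and fin: "finite V" using conn by (auto simp: connected_graph_def graph_def)
  define S where "S = {v \<in> V. f v \<noteq> 0}"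
  have S: "S \<subseteq> V" "finite S" using fin by (auto simp: S_def)
  have "sum f V = sum f S" by (rule sum.mono_neutral_right[OF fin]) (auto simp: S_def)
  then have sumS: "sum f S = 2" using w by (simp add: weight_def)
  have "card S \<le> sum f S" using sum_mono[of S "\<lambda>_. 1" f] by (simp add: S_def Suc_le_eq)
  moreover have "S \<noteq> {}" using sumS by auto
  then have "card S \<noteq> 0" using S(2) by simp
  ultimately have cardS: "card S \<in> {1, 2}" using sumS by auto
  show ?thesis
  proof (cases "V - S = {}")
    case False
    have "independent_join V E S (V - S)"
      unfolding independent_join_def
    proof (intro conjI ballI)
      fix u v assume "u \<in> V - S" "v \<in> V - S"
      then show "\<not> E u v" using f by (auto simp: S_def CID_function_def)
    next
      fix u s assume "u \<in> V - S" "s \<in> S"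
      then show "E u s" using CID_weight_2_zero_adjacent_support[OF fin f w] by (auto simp: S_def)
    qed (use S False in auto)
    then show ?thesis using cardS that by blast
  next
    case True
    \<comment> \<open>no vertex has value 0, so G has two vertices and connectivity makes it K_{1,1}\<close>
    then have "S = V" using S(1) by blast
    then have "card V = 2" using card cardS by auto
    then obtain a b where V: "V = {a, b}" "a \<noteq> b" by (metis card_2_iff)
    have "(E\<^sup>*\<^sup>*) b a" using conn V by (simp add: connected_graph_def)
    then obtain y where "E b y" using V(2) by (cases rule: converse_rtranclpE) auto
    moreover have "y \<in> V" "y \<noteq> b" using \<open>E b y\<close> g unfolding graph_def by blast+
    ultimately have "E b a" using V by auto
    moreover have "\<not> E b b" using g by (simp add: graph_def)
    ultimately have "independent_join V E {a} {b}"
      using V by (simp add: independent_join_def insert_commute)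
    then show ?thesis using that by fastforce
  qed
qed

lemma gamma_cI_eq_2_iff_independent_join:
  assumes conn: "connected_graph V E"
  shows "gamma_cI V E = 2 \<longleftrightarrow> (\<exists>A B. independent_join V E A B \<and> card A \<in> {1, 2})"
proof -
  have fin: "finite V" using conn by (simp add: connected_graph_def graph_def)
  show ?thesis
  proof
    assume gamma: "gamma_cI V E = 2"
    then have card: "card V \<ge> 2" using gamma_cI_le_card[OF fin, of E] by simp
    obtain f where f: "CID_function V E f" and "weight V f = gamma_cI V E"
      using gamma_cI_attained[OF fin] .
    then have w: "weight V f = 2" using gamma by simp
    show "\<exists>A B. independent_join V E A B \<and> card A \<in> {1, 2}"
      using independent_join_of_CID_weight_2[OF conn card f w] by blast
  next
    assume "\<exists>A B. independent_join V E A B \<and> card A \<in> {1, 2}"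
    then obtain A B where join: "independent_join V E A B" and A: "card A \<in> {1, 2}" by blast
    have "card V \<ge> 2" using independent_join_card_ge_2[OF fin join] A by auto
    then show "gamma_cI V E = 2"
      using gamma_cI_eq_2_if_CID_weight_2[OF _ CID_of_independent_join[OF fin join A]] by blast
  qed
qed

lemma independent_join_edge_iff:
  assumes g: "graph V E" and join: "independent_join V E A B"
    and inner: "\<And>u v. u \<in> A \<Longrightarrow> v \<in> A \<Longrightarrow> E u v \<longleftrightarrow> P u v"
  shows "E u v \<longleftrightarrow> (u \<in> A \<and> v \<in> B) \<or> (u \<in> B \<and> v \<in> A) \<or> (u \<in> A \<and> v \<in> A \<and> P u v)"
proof -
  have sym: "E x y \<Longrightarrow> E y x" and in_V: "E x y \<Longrightarrow> x \<in> V \<and> y \<in> V" for x y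
    using g by (simp_all add: graph_def)
  have V: "V = A \<union> B" and indep: "x \<in> B \<Longrightarrow> y \<in> B \<Longrightarrow> \<not> E x y"
    and full: "x \<in> B \<Longrightarrow> a \<in> A \<Longrightarrow> E x a" for x y a
    using join by (simp_all add: independent_join_def)
  show ?thesis
    using in_V[of u v] indep[of u v] full[of u v] full[of v u] sym[of v u] inner[of u v]
    unfolding V by blast
qed

lemma K_form_if_independent_join:
  assumes g: "graph V E" and join: "independent_join V E A B" and A: "card A \<in> {1, 2}"
  shows "\<exists>n\<ge>1. is_K_bip 1 n V E \<or> is_K_bip 2 n V E \<or> is_K2n_star n V E"
proof -
  have AB: "A \<union> B = V" "A \<inter> B = {}" and "B \<noteq> {}" and "finite B"
    using g join by (auto simp: independent_join_def graph_def)
  then have n: "card B \<ge> 1" by (simp add: Suc_le_eq card_gt_0_iff)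
  have sym: "E u v \<Longrightarrow> E v u" and irrefl: "\<not> E u u" for u v
    using g by (auto simp: graph_def)
  consider (one) a where "A = {a}"
    | (two_adjacent) a b where "A = {a, b}" "a \<noteq> b" "E a b"
    | (two_nonadjacent) a b where "A = {a, b}" "a \<noteq> b" "\<not> E a b"
    using A by (metis card_1_singletonE card_2_iff insert_iff singletonD)
  then show ?thesis
  proof cases
    case one
    then have "E u v \<longleftrightarrow> False" if "u \<in> A" "v \<in> A" for u v using that irrefl by auto
    note edge = independent_join_edge_iff[OF g join this]
    have "is_K_bip 1 (card B) V E"
      unfolding is_K_bip_def using AB one edge by (intro exI[of _ A] exI[of _ B]) simp
    then show ?thesis using n by blast
  next
    case two_adjacent
    then have "E u v \<longleftrightarrow> u \<noteq> v" if "u \<in> A" "v \<in> A" for u v using that irrefl sym by auto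
    note edge = independent_join_edge_iff[OF g join this]
    have "is_K2n_star (card B) V E"
      unfolding is_K2n_star_def using AB two_adjacent edge by (intro exI[of _ A] exI[of _ B]) simp
    then show ?thesis using n by blast
  next
    case two_nonadjacent
    then have "E u v \<longleftrightarrow> False" if "u \<in> A" "v \<in> A" for u v using that irrefl sym by auto
    note edge = independent_join_edge_iff[OF g join this]
    have "is_K_bip 2 (card B) V E"
      unfolding is_K_bip_def using AB two_nonadjacent edge by (intro exI[of _ A] exI[of _ B]) simp
    then show ?thesis using n by blast
  qed
qed

lemma independent_join_if_K_form:
  assumes n: "n \<ge> 1" and K: "is_K_bip 1 n V E \<or> is_K_bip 2 n V E \<or> is_K2n_star n V E"
  shows "\<exists>A B. independent_join V E A B \<and> card A \<in> {1, 2}"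
  using K
proof (elim disjE)
  assume "is_K_bip 1 n V E"
  then obtain A B where "A \<union> B = V" "A \<inter> B = {}" "card A = 1" "card B = n"
    and "\<forall>u v. E u v \<longleftrightarrow> (u \<in> A \<and> v \<in> B) \<or> (u \<in> B \<and> v \<in> A)"
    unfolding is_K_bip_def by blast
  then show ?thesis using n by (intro exI[of _ A] exI[of _ B]) (auto simp: independent_join_def)
next
  assume "is_K_bip 2 n V E"
  then obtain A B where "A \<union> B = V" "A \<inter> B = {}" "card A = 2" "card B = n"
    and "\<forall>u v. E u v \<longleftrightarrow> (u \<in> A \<and> v \<in> B) \<or> (u \<in> B \<and> v \<in> A)"
    unfolding is_K_bip_def by blast
  then show ?thesis using n by (intro exI[of _ A] exI[of _ B]) (auto simp: independent_join_def)
next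
  assume "is_K2n_star n V E"
  then obtain A B where "A \<union> B = V" "A \<inter> B = {}" "card A = 2" "card B = n"
    and "\<forall>u v. E u v \<longleftrightarrow> (u \<in> A \<and> v \<in> B) \<or> (u \<in> B \<and> v \<in> A) \<or> (u \<in> A \<and> v \<in> A \<and> u \<noteq> v)"
    unfolding is_K2n_star_def by blast
  then show ?thesis using n by (intro exI[of _ A] exI[of _ B]) (auto simp: independent_join_def)
qed

theorem proposition9:
  fixes V :: "'a set" and E :: "'a \<Rightarrow> 'a \<Rightarrow> bool"
  assumes "connected_graph V E"
  shows "gamma_cI V E = 2 \<longleftrightarrow>
    (\<exists>n\<ge>1. is_K_bip 1 n V E \<or> is_K_bip 2 n V E \<or> is_K2n_star n V E)"
proof -
  have g: "graph V E" using assms by (simp add: connected_graph_def)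
  have "gamma_cI V E = 2 \<longleftrightarrow> (\<exists>A B. independent_join V E A B \<and> card A \<in> {1, 2})"
    by (rule gamma_cI_eq_2_iff_independent_join[OF assms])
  also have "\<dots> \<longleftrightarrow> (\<exists>n\<ge>1. is_K_bip 1 n V E \<or> is_K_bip 2 n V E \<or> is_K2n_star n V E)"
    using K_form_if_independent_join[OF g] independent_join_if_K_form by blast
  finally show ?thesis .
qed

end
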